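(* Let $X$ be a finite set and $N_X:X\times X\to\mathbb{R}$ a phylogenetic network. Then for all $x,x'\in X$, $$N_X(x,x')=\min\{U_X(x,x')\mid U_X\text{ a symmetric ultranetwork over }X\text{ with }U_X\geq N_X\text{ entrywise}\}.$$
   Context: A phylogenetic network over $X$ is a map $N_X:X\times X\to\mathbb{R}$ with $N_X(x,x')=N_X(x',x)$ and $\max\{N_X(x,x),N_X(x',x')\}\leq N_X(x,x')$ for all $x,x'\in X$. A symmetric ultranetwork over $X$ is a map $U_X:X\times X\to\mathbb{R}$ with $U_X(x,x')=U_X(x',x)$ and $U_X(x,x'')\leq\max\{U_X(x,x'),U_X(x',x'')\}$ for all $x,x',x''\in X$. *)

theory Defs
  imports Complex_Main
begin

text \<open>Maps X \<times> X \<rightarrow> real are represented as curried functions, with all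
  conditions relativised to the carrier set X.\<close>

definition phylo_network :: "'a set \<Rightarrow> ('a \<Rightarrow> 'a \<Rightarrow> real) \<Rightarrow> bool" where
  "phylo_network X N \<longleftrightarrow>
     (\<forall>x\<in>X. \<forall>x'\<in>X. N x x' = N x' x \<and> max (N x x) (N x' x') \<le> N x x')"

definition sym_ultranetwork :: "'a set \<Rightarrow> ('a \<Rightarrow> 'a \<Rightarrow> real) \<Rightarrow> bool" where
  "sym_ultranetwork X U \<longleftrightarrow>
     (\<forall>x\<in>X. \<forall>x'\<in>X. U x x' = U x' x) \<and>
     (\<forall>x\<in>X. \<forall>x'\<in>X. \<forall>x''\<in>X. U x x'' \<le> max (U x x') (U x' x''))"

end

theory Submission
  imports Defs
begin

text \<open>The bound is attained by an ultranetwork with only two values: \<open>N x x'\<close> on the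
  pair \<open>{x, x'}\<close>, where it dominates \<open>N\<close> because the diagonal entries of a phylogenetic
  network are below the off-diagonal ones, and an upper bound of \<open>N\<close> elsewhere, which exists
  since \<open>X\<close> is finite. Such a two-level function is ultrametric because any triangle
  leaving the pair has a second side taking the larger value. Minimality is immediate,
  as every admissible \<open>U\<close> dominates \<open>N\<close> entrywise.\<close>

definition two_level :: "'a set \<Rightarrow> real \<Rightarrow> real \<Rightarrow> 'a \<Rightarrow> 'a \<Rightarrow> real" where
  "two_level S c M = (\<lambda>a b. if a \<in> S \<and> b \<in> S then c else M)"

lemma sym_ultranetwork_two_level:
  assumes "c \<le> M"
  shows "sym_ultranetwork X (two_level S c M)"
  using assms unfolding sym_ultranetwork_def two_level_def by auto

lemma phylo_network_le_pair:
  assumes "phylo_network X N" "x \<in> X" "x' \<in> X" "a \<in> {x, x'}" "b \<in> {x, x'}"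
  shows "N a b \<le> N x x'"
  using assms unfolding phylo_network_def by (metis insert_iff max.bounded_iff order_refl singletonD)

lemma finite_bounded_above:
  fixes N :: "'a \<Rightarrow> 'a \<Rightarrow> real"
  assumes "finite X"
  obtains M where "\<And>a b. a \<in> X \<Longrightarrow> b \<in> X \<Longrightarrow> N a b \<le> M"
proof
  fix a b assume "a \<in> X" "b \<in> X"
  then show "N a b \<le> Max ((\<lambda>(a, b). N a b) ` (X \<times> X))"
    using assms by (intro Max_ge) force+
qed

lemma two_level_dominates:
  assumes "phylo_network X N" "x \<in> X" "x' \<in> X" "\<And>a b. a \<in> X \<Longrightarrow> b \<in> X \<Longrightarrow> N a b \<le> M"
  shows "\<forall>a\<in>X. \<forall>b\<in>X. N a b \<le> two_level {x, x'} (N x x') M a b"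
  using assms phylo_network_le_pair[OF assms(1-3)] unfolding two_level_def by auto

theorem mainTheorem7:
  fixes X :: "'a set" and N :: "'a \<Rightarrow> 'a \<Rightarrow> real"
  assumes "finite X" and "phylo_network X N"
  shows "\<forall>x\<in>X. \<forall>x'\<in>X.
    N x x' \<in> {U x x' | U. sym_ultranetwork X U \<and> (\<forall>a\<in>X. \<forall>b\<in>X. N a b \<le> U a b)} \<and>
    (\<forall>v\<in>{U x x' | U. sym_ultranetwork X U \<and> (\<forall>a\<in>X. \<forall>b\<in>X. N a b \<le> U a b)}. N x x' \<le> v)"
proof (intro ballI conjI)
  fix x x' assume x: "x \<in> X" and x': "x' \<in> X"
  obtain M where M: "\<And>a b. a \<in> X \<Longrightarrow> b \<in> X \<Longrightarrow> N a b \<le> M"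
    using finite_bounded_above[OF assms(1)] by blast
  let ?U = "two_level {x, x'} (N x x') M"
  have "sym_ultranetwork X ?U"
    using sym_ultranetwork_two_level M[OF x x'] by blast
  moreover have "\<forall>a\<in>X. \<forall>b\<in>X. N a b \<le> ?U a b"
    using two_level_dominates[OF assms(2) x x' M] by blast
  moreover have "?U x x' = N x x'"
    unfolding two_level_def by simp
  ultimately show "N x x' \<in> {U x x' | U. sym_ultranetwork X U \<and> (\<forall>a\<in>X. \<forall>b\<in>X. N a b \<le> U a b)}"
    unfolding mem_Collect_eq by (intro exI[of _ ?U]) simp
qed blast

end
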